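(* Let $n\ge 2d$. The cone $\Sigma^{S'}_{n,2d}$ of symmetric forms that are sums of squares of forms in $T$ is full-dimensional in $\mathbb{R}^{\pi(2d)}$ (identified with the space $H^S_{n,2d}$ of symmetric forms of degree $2d$ in $n$ variables via coefficients in the basis $\{p^{(n)}_\lambda:\lambda\vdash 2d\}$).
   Context: $p^{(n)}_i=\frac1n(x_1^i+\dots+x_n^i)$, $p^{(n)}_\lambda=\prod_i p^{(n)}_{\lambda_i}$; $\pi(k)$ is the number of partitions of $k$. $H_{n,d}$ is the space of real forms of degree $d$ in $n$ variables, $H^S_{n,k}$ the symmetric forms of degree $k$; $\mathcal{S}_n$ acts by permuting variables. $T\subseteq H_{n,d}$ is the $\mathcal{S}_n$-submodule generated by $H^S_{n,d}$ together with all forms $(x_1^a-x_2^a)g$ with $a\in\{1,\dots,d\}$ and $g\in H^S_{n,d-a}$. *)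

theory Defs
  imports Complex_Main "HOL-Combinatorics.Permutations"
begin

text \<open>Points of R^n are functions x :: nat => real; the variables are x 0, ..., x (n-1)
  (so the paper's x_1, x_2 are x 0, x 1). Real forms are identified with the polynomial
  functions they induce (faithful over the reals).\<close>

definition monomial_exps :: "nat \<Rightarrow> nat \<Rightarrow> (nat \<Rightarrow> nat) set" where
  "monomial_exps n d = {\<alpha>. (\<forall>i\<ge>n. \<alpha> i = 0) \<and> (\<Sum>i<n. \<alpha> i) = d}"

definition monom_fun :: "nat \<Rightarrow> (nat \<Rightarrow> nat) \<Rightarrow> (nat \<Rightarrow> real) \<Rightarrow> real" where
  "monom_fun n \<alpha> x = (\<Prod>i<n. x i ^ \<alpha> i)"

definition forms :: "nat \<Rightarrow> nat \<Rightarrow> ((nat \<Rightarrow> real) \<Rightarrow> real) set" where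
  "forms n d = {f. \<exists>c. f = (\<lambda>x. \<Sum>\<alpha>\<in>monomial_exps n d. c \<alpha> * monom_fun n \<alpha> x)}"

definition sym_forms :: "nat \<Rightarrow> nat \<Rightarrow> ((nat \<Rightarrow> real) \<Rightarrow> real) set" where
  "sym_forms n d = {f \<in> forms n d. \<forall>\<sigma>. \<sigma> permutes {..<n} \<longrightarrow> (\<forall>x. f (x \<circ> \<sigma>) = f x)}"

definition Tgens :: "nat \<Rightarrow> nat \<Rightarrow> ((nat \<Rightarrow> real) \<Rightarrow> real) set" where
  "Tgens n d = sym_forms n d \<union>
     {f. \<exists>a g. a \<in> {1..d} \<and> g \<in> sym_forms n (d - a) \<and> f = (\<lambda>x. (x 0 ^ a - x 1 ^ a) * g x)}"

definition Tsub :: "nat \<Rightarrow> nat \<Rightarrow> ((nat \<Rightarrow> real) \<Rightarrow> real) set" where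
  "Tsub n d = {f. \<exists>(m::nat) c \<sigma> g. (\<forall>i<m. g i \<in> Tgens n d \<and> \<sigma> i permutes {..<n}) \<and>
       f = (\<lambda>x. \<Sum>i<m. c i * g i (x \<circ> \<sigma> i))}"

definition sos_T_cone :: "nat \<Rightarrow> nat \<Rightarrow> ((nat \<Rightarrow> real) \<Rightarrow> real) set" where
  "sos_T_cone n d = {f \<in> sym_forms n (2*d). \<exists>(m::nat) t. (\<forall>i<m. t i \<in> Tsub n d) \<and>
       f = (\<lambda>x. \<Sum>i<m. (t i x)^2)}"

definition pmean :: "nat \<Rightarrow> nat \<Rightarrow> (nat \<Rightarrow> real) \<Rightarrow> real" where
  "pmean n k x = (1 / real n) * (\<Sum>i<n. x i ^ k)"

definition pmean_part :: "nat \<Rightarrow> nat list \<Rightarrow> (nat \<Rightarrow> real) \<Rightarrow> real" where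
  "pmean_part n lam x = prod_list (map (\<lambda>k. pmean n k x) lam)"

definition partitions_of :: "nat \<Rightarrow> nat list set" where
  "partitions_of k = {lam. sorted_wrt (\<ge>) lam \<and> 0 \<notin> set lam \<and> sum_list lam = k}"

end

theory Submission
  imports Defs
begin

text \<open>Let \<open>K\<close> be the set of linear combinations of the \<open>p\<^sub>\<lambda>\<close> (\<open>\<lambda> \<turnstile> 2d\<close>) that are sums of
  squares of forms in \<open>T\<close>. It is a convex cone inside the span of the \<open>p\<^sub>\<lambda>\<close>, so it has an
  interior point as soon as every \<open>p\<^sub>\<lambda>\<close> is a difference of two elements of \<open>K\<close>.
  If \<open>\<lambda>\<close> splits into two halves \<open>\<mu>, \<nu>\<close> of weight \<open>d\<close>, then
  \<open>p\<^sub>\<lambda> = ((p\<^sub>\<mu> + p\<^sub>\<nu>)\<^sup>2 - (p\<^sub>\<mu> - p\<^sub>\<nu>)\<^sup>2) / 4\<close> with \<open>p\<^sub>\<mu>, p\<^sub>\<nu>\<close> symmetric of degree \<open>d\<close>.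
  Otherwise some part \<open>a + b\<close> straddles the halves, \<open>|\<mu>| = d - a\<close>, \<open>|\<nu>| = d - b\<close>, and
  polarising the squares of \<open>(x\<^sub>i\<^sup>a - x\<^sub>j\<^sup>a) p\<^sub>\<mu> \<plusminus> (x\<^sub>i\<^sup>b - x\<^sub>j\<^sup>b) p\<^sub>\<nu> \<in> T\<close>, summed over all \<open>i, j\<close>,
  gives \<open>p\<^sub>\<mu> p\<^sub>\<nu> (p\<^sub>a\<^sub>+\<^sub>b - p\<^sub>a p\<^sub>b) \<in> K - K\<close>. Hence \<open>p\<^sub>\<lambda> \<in> K - K\<close> follows from the same claim for
  the partition \<open>\<mu> \<union> \<nu> \<union> {a, b}\<close>, which has one part more.\<close>

section \<open>Convex cones of real functions\<close>

definition function_cone :: "('a \<Rightarrow> real) set \<Rightarrow> bool" where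
  "function_cone K \<longleftrightarrow> (\<lambda>x. 0) \<in> K \<and> (\<forall>f\<in>K. \<forall>g\<in>K. (\<lambda>x. f x + g x) \<in> K) \<and>
     (\<forall>f\<in>K. \<forall>r\<ge>0. (\<lambda>x. r * f x) \<in> K)"

definition cone_diffs :: "('a \<Rightarrow> real) set \<Rightarrow> ('a \<Rightarrow> real) set" where
  "cone_diffs K = {f. \<exists>A\<in>K. \<exists>B\<in>K. f = (\<lambda>x. A x - B x)}"

lemma function_coneI:
  assumes "(\<lambda>x. 0) \<in> K" "\<And>f g. f \<in> K \<Longrightarrow> g \<in> K \<Longrightarrow> (\<lambda>x. f x + g x) \<in> K"
    "\<And>f r. f \<in> K \<Longrightarrow> r \<ge> 0 \<Longrightarrow> (\<lambda>x. r * f x) \<in> K"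
  shows "function_cone K"
  using assms unfolding function_cone_def by blast

lemma function_cone_sum:
  assumes "function_cone K" "\<And>j. j \<in> J \<Longrightarrow> f j \<in> K"
  shows "(\<lambda>x. \<Sum>j\<in>J. f j x) \<in> K"
  using assms(2)
proof (induction J rule: infinite_finite_induct)
  case (insert a A)
  then show ?case using assms(1) unfolding function_cone_def by simp
qed (use assms(1) in \<open>simp_all add: function_cone_def\<close>)

lemma cone_diffsI: "A \<in> K \<Longrightarrow> B \<in> K \<Longrightarrow> (\<lambda>x. A x - B x) \<in> cone_diffs K"
  unfolding cone_diffs_def by blast

lemma cone_diffs_add:
  assumes "function_cone K" "f \<in> cone_diffs K" "g \<in> cone_diffs K"
  shows "(\<lambda>x. f x + g x) \<in> cone_diffs K"
proof -
  obtain A B A' B' where "A \<in> K" "B \<in> K" "f = (\<lambda>x. A x - B x)" "A' \<in> K" "B' \<in> K" "g = (\<lambda>x. A' x - B' x)"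
    using assms(2,3) unfolding cone_diffs_def by blast
  then show ?thesis
    using assms(1) cone_diffsI[of "\<lambda>x. A x + A' x" K "\<lambda>x. B x + B' x"]
    by (simp add: function_cone_def algebra_simps)
qed

lemma cone_diffs_scale:
  assumes "function_cone K" "f \<in> cone_diffs K"
  shows "(\<lambda>x. r * f x) \<in> cone_diffs K"
proof -
  obtain A B where AB: "A \<in> K" "B \<in> K" "f = (\<lambda>x. A x - B x)"
    using assms(2) unfolding cone_diffs_def by blast
  show ?thesis
  proof (cases "r \<ge> 0")
    case True
    then show ?thesis using AB assms(1) cone_diffsI[of "\<lambda>x. r * A x" K "\<lambda>x. r * B x"]
      by (simp add: function_cone_def algebra_simps)
  next
    case False
    then have "(\<lambda>x. (- r) * B x) \<in> K" "(\<lambda>x. (- r) * A x) \<in> K"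
      using AB assms(1) unfolding function_cone_def by (meson neg_0_le_iff_le nle_le)+
    from cone_diffsI[OF this] show ?thesis using AB by (simp add: algebra_simps)
  qed
qed

lemma cone_diffs_polarization:
  assumes "function_cone K"
    and "(\<lambda>x. \<Sum>j\<in>J. (f j x + g j x)\<^sup>2) \<in> K" "(\<lambda>x. \<Sum>j\<in>J. (f j x - g j x)\<^sup>2) \<in> K"
  shows "(\<lambda>x. \<Sum>j\<in>J. f j x * g j x) \<in> cone_diffs K"
proof -
  have "(\<lambda>x. (1/4) * ((\<Sum>j\<in>J. (f j x + g j x)\<^sup>2) - (\<Sum>j\<in>J. (f j x - g j x)\<^sup>2))) \<in> cone_diffs K"
    using cone_diffs_scale[OF assms(1) cone_diffsI[OF assms(2,3)]] .
  moreover have "(1/4) * ((\<Sum>j\<in>J. (f j x + g j x)\<^sup>2) - (\<Sum>j\<in>J. (f j x - g j x)\<^sup>2)) = (\<Sum>j\<in>J. f j x * g j x)" for x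
    by (simp add: sum_subtractf[symmetric] sum_distrib_left power2_eq_square algebra_simps)
  ultimately show ?thesis by simp
qed

text \<open>If the cone spans the space of the \<open>b i\<close>, the coefficient vector of
  \<open>\<Sum>\<^sub>i (A\<^sub>i + B\<^sub>i)\<close>, where \<open>b i = A\<^sub>i - B\<^sub>i\<close>, is an interior point: perturbing its \<open>i\<close>-th
  coefficient by \<open>\<delta>\<close> with \<open>|\<delta>| < 1\<close> gives \<open>\<Sum>\<^sub>i ((1 + \<delta>\<^sub>i) A\<^sub>i + (1 - \<delta>\<^sub>i) B\<^sub>i) \<in> K\<close>.\<close>
lemma function_cone_has_interior_point:
  fixes b :: "'i \<Rightarrow> 'a \<Rightarrow> real"
  assumes K: "function_cone K"
    and span: "K \<subseteq> {f. \<exists>e. f = (\<lambda>x. \<Sum>i\<in>I. e i * b i x)}"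
    and diffs: "\<And>i. i \<in> I \<Longrightarrow> b i \<in> cone_diffs K"
  shows "\<exists>c0. \<exists>\<epsilon>>0. \<forall>c. (\<forall>i\<in>I. \<bar>c i - c0 i\<bar> < \<epsilon>) \<longrightarrow> (\<lambda>x. \<Sum>i\<in>I. c i * b i x) \<in> K"
proof -
  have "\<forall>i\<in>I. \<exists>A. A \<in> K \<and> (\<exists>B. B \<in> K \<and> b i = (\<lambda>x. A x - B x))"
    using diffs unfolding cone_diffs_def by blast
  then obtain A B where AB: "\<And>i. i \<in> I \<Longrightarrow> A i \<in> K \<and> B i \<in> K \<and> b i = (\<lambda>x. A i x - B i x)"
    by metis
  have "(\<lambda>x. \<Sum>i\<in>I. A i x + B i x) \<in> K"
    using K AB by (intro function_cone_sum) (auto simp: function_cone_def)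
  then obtain c0 where c0: "\<And>x. (\<Sum>i\<in>I. A i x + B i x) = (\<Sum>i\<in>I. c0 i * b i x)"
    using span by (auto dest!: subsetD simp: fun_eq_iff)
  have "(\<lambda>x. \<Sum>i\<in>I. c i * b i x) \<in> K" if c: "\<forall>i\<in>I. \<bar>c i - c0 i\<bar> < 1" for c
  proof -
    have "(\<Sum>i\<in>I. c i * b i x) =
        (\<Sum>i\<in>I. (1 + (c i - c0 i)) * A i x + (1 - (c i - c0 i)) * B i x)" for x
    proof -
      have "(\<Sum>i\<in>I. c i * b i x) = (\<Sum>i\<in>I. c0 i * b i x) + (\<Sum>i\<in>I. (c i - c0 i) * b i x)"
        by (simp add: sum.distrib[symmetric] algebra_simps)
      also have "\<dots> = (\<Sum>i\<in>I. A i x + B i x + (c i - c0 i) * (A i x - B i x))"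
        unfolding c0[symmetric] sum.distrib[symmetric] using AB by (intro sum.cong) auto
      finally show ?thesis by (simp add: algebra_simps)
    qed
    moreover have "(\<lambda>x. \<Sum>i\<in>I. (1 + (c i - c0 i)) * A i x + (1 - (c i - c0 i)) * B i x) \<in> K"
      using K AB c by (intro function_cone_sum) (auto simp: function_cone_def abs_less_iff)
    ultimately show ?thesis by simp
  qed
  then show ?thesis by (intro exI[of _ c0] exI[of _ 1]) auto
qed

lemma finite_monomial_exps: "finite (monomial_exps n d)"
proof -
  have "\<alpha> i \<le> d" if "\<alpha> \<in> monomial_exps n d" "i < n" for \<alpha> i
    using that member_le_sum[of i "{..<n}" \<alpha>] by (simp add: monomial_exps_def)
  then have "monomial_exps n d \<subseteq> {\<alpha>. \<forall>i. (i \<in> {..<n} \<longrightarrow> \<alpha> i \<in> {..d}) \<and> (i \<notin> {..<n} \<longrightarrow> \<alpha> i = 0)}"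
    by (auto simp: monomial_exps_def)
  then show ?thesis by (rule finite_subset) (intro finite_set_of_finite_funs; simp)
qed

lemma formsE:
  assumes "f \<in> forms n d"
  obtains c where "f = (\<lambda>x. \<Sum>\<alpha>\<in>monomial_exps n d. c \<alpha> * monom_fun n \<alpha> x)"
  using assms unfolding forms_def by auto

lemma sum_monomials_in_forms:
  assumes "finite I" "\<And>i. i \<in> I \<Longrightarrow> h i \<in> monomial_exps n d"
  shows "(\<lambda>x. \<Sum>i\<in>I. a i * monom_fun n (h i) x) \<in> forms n d"
proof -
  define c where "c \<gamma> = (\<Sum>i\<in>{i\<in>I. h i = \<gamma>}. a i)" for \<gamma>
  have "(\<Sum>\<gamma>\<in>monomial_exps n d. c \<gamma> * monom_fun n \<gamma> x) = (\<Sum>i\<in>I. a i * monom_fun n (h i) x)" for x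
  proof -
    have "(\<Sum>\<gamma>\<in>monomial_exps n d. c \<gamma> * monom_fun n \<gamma> x) =
        (\<Sum>\<gamma>\<in>monomial_exps n d. \<Sum>i\<in>{i\<in>I. h i = \<gamma>}. a i * monom_fun n (h i) x)"
      unfolding c_def by (auto simp: sum_distrib_right intro!: sum.cong)
    also have "\<dots> = (\<Sum>i\<in>I. a i * monom_fun n (h i) x)"
      using assms finite_monomial_exps by (intro sum.group) auto
    finally show ?thesis .
  qed
  then show ?thesis unfolding forms_def by (auto intro!: exI[of _ c])
qed

lemma forms_mult:
  assumes "f \<in> forms n d" "g \<in> forms n e"
  shows "(\<lambda>x. f x * g x) \<in> forms n (d + e)"
proof -
  obtain c c' where f: "f = (\<lambda>x. \<Sum>\<alpha>\<in>monomial_exps n d. c \<alpha> * monom_fun n \<alpha> x)"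
    and g: "g = (\<lambda>x. \<Sum>\<beta>\<in>monomial_exps n e. c' \<beta> * monom_fun n \<beta> x)"
    using assms by (metis formsE)
  let ?I = "monomial_exps n d \<times> monomial_exps n e"
  have monom_add: "monom_fun n \<alpha> x * monom_fun n \<beta> x = monom_fun n (\<lambda>i. \<alpha> i + \<beta> i) x" for \<alpha> \<beta> x
    by (simp add: monom_fun_def power_add prod.distrib)
  have "f x * g x = (\<Sum>p\<in>?I. (c (fst p) * c' (snd p)) * monom_fun n (\<lambda>i. fst p i + snd p i) x)" for x
    unfolding f g sum_product sum.cartesian_product
    by (intro sum.cong) (auto simp: monom_add[symmetric] mult_ac)
  moreover have "(\<lambda>i. \<alpha> i + \<beta> i) \<in> monomial_exps n (d + e)"
    if "\<alpha> \<in> monomial_exps n d" "\<beta> \<in> monomial_exps n e" for \<alpha> \<beta>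
    using that by (simp add: monomial_exps_def sum.distrib)
  then have "(\<lambda>x. \<Sum>p\<in>?I. (c (fst p) * c' (snd p)) * monom_fun n (\<lambda>i. fst p i + snd p i) x) \<in> forms n (d + e)"
    by (intro sum_monomials_in_forms) (auto simp: finite_monomial_exps)
  ultimately show ?thesis by simp
qed

lemma forms_add:
  assumes "f \<in> forms n d" "g \<in> forms n d"
  shows "(\<lambda>x. f x + g x) \<in> forms n d"
proof -
  obtain c c' where "f = (\<lambda>x. \<Sum>\<alpha>\<in>monomial_exps n d. c \<alpha> * monom_fun n \<alpha> x)"
    and "g = (\<lambda>x. \<Sum>\<alpha>\<in>monomial_exps n d. c' \<alpha> * monom_fun n \<alpha> x)"
    using assms by (metis formsE)
  then show ?thesis unfolding forms_def
    by (intro CollectI exI[of _ "\<lambda>\<alpha>. c \<alpha> + c' \<alpha>"]) (simp add: sum.distrib algebra_simps)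
qed

lemma forms_scale:
  assumes "f \<in> forms n d"
  shows "(\<lambda>x. r * f x) \<in> forms n d"
proof -
  obtain c where "f = (\<lambda>x. \<Sum>\<alpha>\<in>monomial_exps n d. c \<alpha> * monom_fun n \<alpha> x)"
    using assms by (rule formsE)
  then show ?thesis unfolding forms_def
    by (intro CollectI exI[of _ "\<lambda>\<alpha>. r * c \<alpha>"]) (simp add: sum_distrib_left algebra_simps)
qed

lemma forms_sum: "(\<And>j. j \<in> J \<Longrightarrow> f j \<in> forms n d) \<Longrightarrow> (\<lambda>x. \<Sum>j\<in>J. f j x) \<in> forms n d"
proof (induction J rule: infinite_finite_induct)
  case (insert a A)
  then show ?case by (simp add: forms_add)
qed (simp_all add: forms_def exI[of _ "\<lambda>_. 0"])

lemma forms_one: "(\<lambda>x. 1) \<in> forms n 0"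
  using sum_monomials_in_forms[of "{()}" "\<lambda>_. \<lambda>_. 0" n 0 "\<lambda>_. 1"]
  by (simp add: monomial_exps_def monom_fun_def)

lemma forms_power_var:
  assumes "i < n"
  shows "(\<lambda>x. x i ^ k) \<in> forms n k"
proof -
  have "monom_fun n (\<lambda>j. if j = i then k else 0) x = x i ^ k" for x
    unfolding monom_fun_def using assms
    by (simp add: if_distrib[of "\<lambda>e. x _ ^ e"] prod.delta' cong: if_cong)
  moreover have "(\<lambda>x. \<Sum>_\<in>{()}. 1 * monom_fun n (\<lambda>j. if j = i then k else 0) x) \<in> forms n k"
    using assms by (intro sum_monomials_in_forms) (auto simp: monomial_exps_def)
  ultimately show ?thesis by simp
qed

lemma sym_forms_add:
  "f \<in> sym_forms n d \<Longrightarrow> g \<in> sym_forms n d \<Longrightarrow> (\<lambda>x. f x + g x) \<in> sym_forms n d"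
  unfolding sym_forms_def by (auto intro: forms_add)

lemma sym_forms_scale: "f \<in> sym_forms n d \<Longrightarrow> (\<lambda>x. r * f x) \<in> sym_forms n d"
  unfolding sym_forms_def by (auto intro: forms_scale)

lemma sym_forms_sum:
  "(\<And>j. j \<in> J \<Longrightarrow> f j \<in> sym_forms n d) \<Longrightarrow> (\<lambda>x. \<Sum>j\<in>J. f j x) \<in> sym_forms n d"
  unfolding sym_forms_def by (auto intro!: forms_sum sum.cong)

lemma pmean_part_Nil [simp]: "pmean_part n [] x = 1"
  and pmean_part_Cons [simp]: "pmean_part n (k # l) x = pmean n k x * pmean_part n l x"
  and pmean_part_append [simp]: "pmean_part n (l @ l') x = pmean_part n l x * pmean_part n l' x"
  by (simp_all add: pmean_part_def)

lemma pmean_part_mset_cong: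
  assumes "mset l = mset l'"
  shows "pmean_part n l = pmean_part n l'"
proof
  fix x
  have "pmean_part n l x = prod_mset (image_mset (\<lambda>k. pmean n k x) (mset l))" for l
    unfolding pmean_part_def by (simp add: prod_mset_prod_list[symmetric])
  then show "pmean_part n l x = pmean_part n l' x" using assms by simp
qed

lemma pmean_in_forms: "pmean n k \<in> forms n k"
proof -
  have "(\<lambda>x. (1 / real n) * (\<Sum>i<n. x i ^ k)) \<in> forms n k"
    by (intro forms_scale forms_sum forms_power_var) auto
  then show ?thesis by (simp add: pmean_def[abs_def])
qed

lemma pmean_part_in_forms: "pmean_part n l \<in> forms n (sum_list l)"
proof (induction l)
  case Nil
  then show ?case using forms_one by (simp add: pmean_part_def)
next
  case (Cons k l)
  then show ?case using forms_mult[OF pmean_in_forms Cons.IH] by (simp add: pmean_part_def)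
qed

lemma pmean_permutes:
  assumes "\<sigma> permutes {..<n}"
  shows "pmean n k (x \<circ> \<sigma>) = pmean n k x"
  using sum.reindex_bij_betw[OF permutes_imp_bij[OF assms], of "\<lambda>i. x i ^ k"]
  by (simp add: pmean_def)

lemma pmean_part_in_sym_forms: "pmean_part n l \<in> sym_forms n (sum_list l)"
proof -
  have "pmean_part n l (x \<circ> \<sigma>) = pmean_part n l x" if "\<sigma> permutes {..<n}" for \<sigma> x
    by (induction l) (simp_all add: pmean_permutes[OF that, unfolded comp_def])
  then show ?thesis using pmean_part_in_forms by (auto simp: sym_forms_def)
qed

lemma sum_sum_diff_mult_diff:
  fixes \<alpha> \<beta> :: "nat \<Rightarrow> real"
  shows "(\<Sum>i<n. \<Sum>j<n. (\<alpha> i - \<alpha> j) * (\<beta> i - \<beta> j)) =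
    2 * n * (\<Sum>i<n. \<alpha> i * \<beta> i) - 2 * (\<Sum>i<n. \<alpha> i) * (\<Sum>i<n. \<beta> i)"
proof -
  have "(\<Sum>i<n. \<Sum>j<n. (\<alpha> i - \<alpha> j) * (\<beta> i - \<beta> j)) =
      (\<Sum>i<n. \<Sum>j<n. \<alpha> i * \<beta> i) - (\<Sum>i<n. \<Sum>j<n. \<alpha> i * \<beta> j)
      - (\<Sum>i<n. \<Sum>j<n. \<alpha> j * \<beta> i) + (\<Sum>i<n. \<Sum>j<n. \<alpha> j * \<beta> j)"
    by (simp add: algebra_simps sum.distrib sum_subtractf)
  also have "\<dots> = 2 * real n * (\<Sum>i<n. \<alpha> i * \<beta> i) - 2 * (\<Sum>i<n. \<alpha> i) * (\<Sum>i<n. \<beta> i)"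
    by (simp add: sum_product[symmetric] sum.swap[of "\<lambda>i j. \<alpha> j * \<beta> i"]
        sum_distrib_left[symmetric] sum_distrib_right[symmetric] algebra_simps)
  finally show ?thesis .
qed

lemma sum_sum_power_diffs:
  fixes x :: "nat \<Rightarrow> real"
  shows "(\<Sum>i<n. \<Sum>j<n. (x i ^ a - x j ^ a) * (x i ^ b - x j ^ b)) =
    2 * (real n)\<^sup>2 * (pmean n (a + b) x - pmean n a x * pmean n b x)"
proof -
  have sums: "(\<Sum>i<n. x i ^ k) = real n * pmean n k x" for k
    by (cases "n = 0") (simp_all add: pmean_def)
  show ?thesis
    unfolding sum_sum_diff_mult_diff by (simp add: power_add[symmetric] sums power2_eq_square algebra_simps)
qed

lemma length_le_sum_list: "0 \<notin> set l \<Longrightarrow> length l \<le> sum_list (l :: nat list)"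
  by (induction l) auto

lemma finite_partitions_of: "finite (partitions_of k)"
proof (rule finite_subset)
  show "partitions_of k \<subseteq> {l. set l \<subseteq> {..k} \<and> length l \<le> k}"
  proof
    fix l assume l: "l \<in> partitions_of k"
    then have "set l \<subseteq> {..k}" using member_le_sum_list[of _ l] by (auto simp: partitions_of_def)
    with l show "l \<in> {l. set l \<subseteq> {..k} \<and> length l \<le> k}"
      using length_le_sum_list[of l] by (simp add: partitions_of_def)
  qed
qed (rule finite_lists_length_le, simp)

lemma partition_of_sorted:
  assumes "0 \<notin> set l" "sum_list l = k"
  shows "rev (sort l) \<in> partitions_of k"
proof -
  have "sum_list (rev (sort l)) = sum_list l"
    by (metis mset_rev mset_sort sum_mset_sum_list)
  then show ?thesis
    using assms sorted_sort[of l] by (simp add: partitions_of_def sorted_wrt_rev)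
qed

definition pmean_span :: "nat \<Rightarrow> nat \<Rightarrow> ((nat \<Rightarrow> real) \<Rightarrow> real) set" where
  "pmean_span n k = {f. \<exists>e. f = (\<lambda>x. \<Sum>lam\<in>partitions_of k. e lam * pmean_part n lam x)}"

lemma pmean_span_add:
  assumes "f \<in> pmean_span n k" "g \<in> pmean_span n k"
  shows "(\<lambda>x. f x + g x) \<in> pmean_span n k"
proof -
  obtain e e' where "f = (\<lambda>x. \<Sum>lam\<in>partitions_of k. e lam * pmean_part n lam x)"
    and "g = (\<lambda>x. \<Sum>lam\<in>partitions_of k. e' lam * pmean_part n lam x)"
    using assms unfolding pmean_span_def by blast
  then show ?thesis unfolding pmean_span_def
    by (intro CollectI exI[of _ "\<lambda>l. e l + e' l"]) (simp add: sum.distrib algebra_simps)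
qed

lemma pmean_span_scale:
  assumes "f \<in> pmean_span n k"
  shows "(\<lambda>x. r * f x) \<in> pmean_span n k"
proof -
  obtain e where "f = (\<lambda>x. \<Sum>lam\<in>partitions_of k. e lam * pmean_part n lam x)"
    using assms unfolding pmean_span_def by blast
  then show ?thesis unfolding pmean_span_def
    by (intro CollectI exI[of _ "\<lambda>l. r * e l"]) (simp add: sum_distrib_left algebra_simps)
qed

lemma pmean_span_diff:
  "f \<in> pmean_span n k \<Longrightarrow> g \<in> pmean_span n k \<Longrightarrow> (\<lambda>x. f x - g x) \<in> pmean_span n k"
  using pmean_span_add[of f n k "\<lambda>x. (-1) * g x"] pmean_span_scale[of g n k "-1"] by simp

lemma pmean_span_zero: "(\<lambda>x. 0) \<in> pmean_span n k"
  by (auto simp: pmean_span_def intro!: exI[of _ "\<lambda>_. 0"])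

lemma pmean_part_in_pmean_span:
  assumes "0 \<notin> set l" "sum_list l = k"
  shows "pmean_part n l \<in> pmean_span n k"
proof -
  let ?lam = "rev (sort l)"
  have "(\<Sum>l'\<in>partitions_of k. (if l' = ?lam then 1 else 0) * pmean_part n l' x) = pmean_part n ?lam x" for x
  proof -
    have "(\<Sum>l'\<in>partitions_of k. (if l' = ?lam then 1 else 0) * pmean_part n l' x) =
        (\<Sum>l'\<in>partitions_of k. if l' = ?lam then pmean_part n l' x else 0)"
      by (intro sum.cong) auto
    then show ?thesis using partition_of_sorted[OF assms] finite_partitions_of by simp
  qed
  moreover have "pmean_part n ?lam = pmean_part n l" by (intro pmean_part_mset_cong) simp
  ultimately have "pmean_part n l = (\<lambda>x. \<Sum>l'\<in>partitions_of k. (if l' = ?lam then 1 else 0) * pmean_part n l' x)"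
    by simp
  then show ?thesis unfolding pmean_span_def by (intro CollectI exI[of _ "\<lambda>l'. if l' = ?lam then 1 else 0"])
qed

lemma pmean_span_subset_sym_forms: "pmean_span n k \<subseteq> sym_forms n k"
proof
  fix f assume "f \<in> pmean_span n k"
  then obtain e where f: "f = (\<lambda>x. \<Sum>lam\<in>partitions_of k. e lam * pmean_part n lam x)"
    unfolding pmean_span_def by blast
  have "pmean_part n lam \<in> sym_forms n k" if "lam \<in> partitions_of k" for lam
    using that pmean_part_in_sym_forms[of n lam] by (simp add: partitions_of_def)
  then show "f \<in> sym_forms n k" unfolding f by (intro sym_forms_sum sym_forms_scale)
qed

section \<open>Sums of squares of forms in \<open>T\<close>\<close>

lemma ex_permutes_0_1:
  fixes i j n :: nat
  assumes "i < n" "j < n" "i \<noteq> j"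
  shows "\<exists>\<sigma>. \<sigma> permutes {..<n} \<and> \<sigma> 0 = i \<and> \<sigma> 1 = j"
proof -
  define k where "k = transpose 0 i j"
  have k: "k < n" "k \<noteq> 0" using assms unfolding k_def by (auto simp: transpose_def)
  let ?\<sigma> = "transpose 0 i \<circ> transpose 1 k"
  have "?\<sigma> permutes {..<n}"
    using assms k by (intro permutes_compose permutes_swap_id) auto
  moreover have "?\<sigma> 0 = i" "?\<sigma> 1 = j" using assms k by (auto simp: k_def transpose_def)
  ultimately show ?thesis by blast
qed

lemma Tgens_permute_in_Tsub:
  assumes "g \<in> Tgens n d" "\<sigma> permutes {..<n}"
  shows "(\<lambda>x. g (x \<circ> \<sigma>)) \<in> Tsub n d"
  unfolding Tsub_def using assms
  by (intro CollectI exI[of _ "1::nat"] exI[of _ "\<lambda>_. 1"] exI[of _ "\<lambda>_. \<sigma>"] exI[of _ "\<lambda>_. g"]) auto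

lemma Tsub_zero: "(\<lambda>x. 0) \<in> Tsub n d"
  unfolding Tsub_def by (intro CollectI exI[of _ "0::nat"]) simp

lemma sym_forms_subset_Tsub: "sym_forms n d \<subseteq> Tsub n d"
  using Tgens_permute_in_Tsub[OF _ permutes_id] by (auto simp: Tgens_def)

lemma Tsub_add:
  assumes "t \<in> Tsub n d" "t' \<in> Tsub n d"
  shows "(\<lambda>x. t x + t' x) \<in> Tsub n d"
proof -
  obtain m and c :: "nat \<Rightarrow> real" and \<sigma> g where h: "\<forall>i<m. g i \<in> Tgens n d \<and> \<sigma> i permutes {..<n}"
    and t: "t = (\<lambda>x. \<Sum>i<m. c i * g i (x \<circ> \<sigma> i))"
    using assms(1) unfolding Tsub_def by blast
  obtain m' and c' :: "nat \<Rightarrow> real" and \<sigma>' g' where h': "\<forall>i<m'. g' i \<in> Tgens n d \<and> \<sigma>' i permutes {..<n}"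
    and t': "t' = (\<lambda>x. \<Sum>i<m'. c' i * g' i (x \<circ> \<sigma>' i))"
    using assms(2) unfolding Tsub_def by blast
  define F where "F i = (if i < m then (c i, g i, \<sigma> i) else (c' (i - m), g' (i - m), \<sigma>' (i - m)))" for i
  have "(\<Sum>i<m + m'. fst (F i) * fst (snd (F i)) (x \<circ> snd (snd (F i)))) = t x + t' x" for x
  proof -
    define h where "h i = fst (F i) * fst (snd (F i)) (x \<circ> snd (snd (F i)))" for i
    have "(\<Sum>i<m + m'. h i) = (\<Sum>i\<in>{0..<m}. h i) + (\<Sum>i\<in>{m..<m + m'}. h i)"
      unfolding atLeast0LessThan[symmetric] by (rule sum.atLeastLessThan_concat[symmetric]) simp_all
    also have "(\<Sum>i\<in>{m..<m + m'}. h i) = (\<Sum>i\<in>{0..<m'}. h (i + m))"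
      using sum.shift_bounds_nat_ivl[of h 0 m m'] by (simp add: add.commute)
    finally show ?thesis by (simp add: h_def F_def t t' atLeast0LessThan)
  qed
  moreover have "\<forall>i<m + m'. fst (snd (F i)) \<in> Tgens n d \<and> snd (snd (F i)) permutes {..<n}"
    using h h' by (simp add: F_def)
  ultimately show ?thesis unfolding Tsub_def
    by (intro CollectI exI[of _ "m + m'"] exI[of _ "\<lambda>i. fst (F i)"] exI[of _ "\<lambda>i. snd (snd (F i))"]
        exI[of _ "\<lambda>i. fst (snd (F i))"]) auto
qed

lemma Tsub_scale:
  assumes "t \<in> Tsub n d"
  shows "(\<lambda>x. r * t x) \<in> Tsub n d"
proof -
  obtain m and c :: "nat \<Rightarrow> real" and \<sigma> g where h: "\<forall>i<m. g i \<in> Tgens n d \<and> \<sigma> i permutes {..<n}"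
    and t: "t = (\<lambda>x. \<Sum>i<m. c i * g i (x \<circ> \<sigma> i))"
    using assms unfolding Tsub_def by blast
  show ?thesis unfolding Tsub_def t
    by (intro CollectI exI[of _ m] exI[of _ "\<lambda>i. r * c i"] exI[of _ \<sigma>] exI[of _ g])
       (use h in \<open>auto simp: sum_distrib_left mult_ac\<close>)
qed

lemma power_diff_mult_sym_form_in_Tsub:
  assumes "i < n" "j < n" "a \<in> {1..d}" "g \<in> sym_forms n (d - a)"
  shows "(\<lambda>x. (x i ^ a - x j ^ a) * g x) \<in> Tsub n d"
proof (cases "i = j")
  case True
  then show ?thesis using Tsub_zero by simp
next
  case False
  then obtain \<sigma> where \<sigma>: "\<sigma> permutes {..<n}" "\<sigma> 0 = i" "\<sigma> 1 = j"
    using ex_permutes_0_1[OF assms(1,2) False] by blast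
  have "(\<lambda>y. (y 0 ^ a - y 1 ^ a) * g y) \<in> Tgens n d"
    unfolding Tgens_def using assms(3,4) by (intro UnI2 CollectI exI[of _ a] exI[of _ g]) simp
  from Tgens_permute_in_Tsub[OF this \<sigma>(1)] show ?thesis
    using assms(4) \<sigma> by (simp add: sym_forms_def)
qed

definition sums_of_squares :: "('a \<Rightarrow> real) set \<Rightarrow> ('a \<Rightarrow> real) set" where
  "sums_of_squares T = {f. \<exists>ts. set ts \<subseteq> T \<and> f = (\<lambda>x. \<Sum>t\<leftarrow>ts. (t x)\<^sup>2)}"

lemma square_in_sums_of_squares: "t \<in> T \<Longrightarrow> (\<lambda>x. (t x)\<^sup>2) \<in> sums_of_squares T"
  unfolding sums_of_squares_def by (intro CollectI exI[of _ "[t]"]) auto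

lemma function_cone_sums_of_squares:
  assumes "\<And>t r. t \<in> T \<Longrightarrow> (\<lambda>x. r * t x) \<in> T"
  shows "function_cone (sums_of_squares T)"
proof (rule function_coneI)
  show "(\<lambda>x. 0) \<in> sums_of_squares T"
    unfolding sums_of_squares_def by (intro CollectI exI[of _ "[]"]) auto
next
  fix f g assume "f \<in> sums_of_squares T" "g \<in> sums_of_squares T"
  then obtain ts us where "set ts \<subseteq> T" "f = (\<lambda>x. \<Sum>t\<leftarrow>ts. (t x)\<^sup>2)"
    "set us \<subseteq> T" "g = (\<lambda>x. \<Sum>t\<leftarrow>us. (t x)\<^sup>2)"
    unfolding sums_of_squares_def by blast
  then show "(\<lambda>x. f x + g x) \<in> sums_of_squares T"
    unfolding sums_of_squares_def by (intro CollectI exI[of _ "ts @ us"]) auto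
next
  fix f and r :: real assume "f \<in> sums_of_squares T" "r \<ge> 0"
  then obtain ts where ts: "set ts \<subseteq> T" "f = (\<lambda>x. \<Sum>t\<leftarrow>ts. (t x)\<^sup>2)"
    unfolding sums_of_squares_def by blast
  let ?us = "map (\<lambda>t x. sqrt r * t x) ts"
  have "set ?us \<subseteq> T" using ts(1) assms by auto
  moreover have "(\<lambda>x. r * f x) = (\<lambda>x. \<Sum>t\<leftarrow>?us. (t x)\<^sup>2)"
    using \<open>r \<ge> 0\<close> by (auto simp: ts(2) o_def power_mult_distrib sum_list_const_mult[symmetric])
  ultimately show "(\<lambda>x. r * f x) \<in> sums_of_squares T"
    unfolding sums_of_squares_def by blast
qed

lemma sums_of_squares_indexed:
  assumes "f \<in> sums_of_squares T"
  shows "\<exists>(m::nat) t. (\<forall>i<m. t i \<in> T) \<and> f = (\<lambda>x. \<Sum>i<m. (t i x)\<^sup>2)"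
proof -
  obtain ts where ts: "set ts \<subseteq> T" "f = (\<lambda>x. \<Sum>t\<leftarrow>ts. (t x)\<^sup>2)"
    using assms unfolding sums_of_squares_def by blast
  then have "f = (\<lambda>x. \<Sum>i<length ts. ((ts ! i) x)\<^sup>2)"
    by (auto simp: sum_list_sum_nth atLeast0LessThan)
  moreover have "\<forall>i<length ts. ts ! i \<in> T" using ts(1) by auto
  ultimately show ?thesis by (intro exI[of _ "length ts"] exI[of _ "(!) ts"]) simp
qed

definition pmean_sos_cone :: "nat \<Rightarrow> nat \<Rightarrow> ((nat \<Rightarrow> real) \<Rightarrow> real) set" where
  "pmean_sos_cone n d = pmean_span n (2 * d) \<inter> sums_of_squares (Tsub n d)"

lemma function_cone_pmean_sos_cone: "function_cone (pmean_sos_cone n d)"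
proof -
  have "function_cone (sums_of_squares (Tsub n d))"
    by (rule function_cone_sums_of_squares) (rule Tsub_scale)
  then show ?thesis
    unfolding pmean_sos_cone_def function_cone_def
    using pmean_span_zero pmean_span_add pmean_span_scale by blast
qed

lemma pmean_sos_cone_subset_sos_T_cone: "pmean_sos_cone n d \<subseteq> sos_T_cone n d"
proof
  fix f assume "f \<in> pmean_sos_cone n d"
  then have "f \<in> sym_forms n (2 * d)" "f \<in> sums_of_squares (Tsub n d)"
    using pmean_span_subset_sym_forms unfolding pmean_sos_cone_def by auto
  then show "f \<in> sos_T_cone n d"
    unfolding sos_T_cone_def using sums_of_squares_indexed by blast
qed

section \<open>Power means as differences of sums of squares\<close>

lemma pmean_part_halves_in_cone_diffs:
  assumes "0 \<notin> set u" "0 \<notin> set v" "sum_list u = d" "sum_list v = d"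
  shows "pmean_part n (u @ v) \<in> cone_diffs (pmean_sos_cone n d)"
proof -
  let ?U = "pmean_part n u" and ?V = "pmean_part n v" and ?p = "pmean_part n"
  have "?U \<in> sym_forms n d" "?V \<in> sym_forms n d"
    using pmean_part_in_sym_forms assms(3,4) by metis+
  then have T: "(\<lambda>x. ?U x + s * ?V x) \<in> Tsub n d" for s
    using sym_forms_subset_Tsub by (blast intro: sym_forms_add sym_forms_scale)
  have K: "(\<lambda>x. \<Sum>_\<in>{()}. (?U x + s * ?V x)\<^sup>2) \<in> pmean_sos_cone n d" for s
  proof -
    have "(\<lambda>x. (?U x + s * ?V x)\<^sup>2) = (\<lambda>x. ?p (u @ u) x + (2 * s * ?p (u @ v) x + s\<^sup>2 * ?p (v @ v) x))"
      by (simp add: power2_eq_square algebra_simps)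
    also have "\<dots> \<in> pmean_span n (2 * d)"
      using assms by (intro pmean_span_add pmean_span_scale pmean_part_in_pmean_span) auto
    finally show ?thesis
      using square_in_sums_of_squares[OF T] by (simp add: pmean_sos_cone_def)
  qed
  have "(\<lambda>x. \<Sum>_\<in>{()}. ?U x * ?V x) \<in> cone_diffs (pmean_sos_cone n d)"
    using cone_diffs_polarization[OF function_cone_pmean_sos_cone K[of 1]] K[of "-1"] by simp
  moreover have "pmean_part n (u @ v) = (\<lambda>x. ?U x * ?V x)" by (simp add: fun_eq_iff)
  ultimately show ?thesis by simp
qed

lemma pmean_parts_mult_power_diffs_in_pmean_span:
  assumes "0 \<notin> set u" "0 \<notin> set v" "a \<ge> 1" "b \<ge> 1" "sum_list u + sum_list v + a + b = k"
  shows "(\<lambda>x. pmean_part n u x * pmean_part n v x *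
            (\<Sum>i<n. \<Sum>j<n. (x i ^ a - x j ^ a) * (x i ^ b - x j ^ b))) \<in> pmean_span n k"
proof -
  have "(\<lambda>x. 2 * (real n)\<^sup>2 * (pmean_part n (u @ v @ [a + b]) x - pmean_part n (u @ v @ [a, b]) x))
      \<in> pmean_span n k"
    using assms by (intro pmean_span_scale pmean_span_diff pmean_part_in_pmean_span) auto
  moreover have "pmean_part n u x * pmean_part n v x * (\<Sum>i<n. \<Sum>j<n. (x i ^ a - x j ^ a) * (x i ^ b - x j ^ b))
      = 2 * (real n)\<^sup>2 * (pmean_part n (u @ v @ [a + b]) x - pmean_part n (u @ v @ [a, b]) x)" for x
    unfolding sum_sum_power_diffs by (simp add: algebra_simps)
  ultimately show ?thesis by simp
qed

lemma sum_square_expand: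
  fixes u v s :: real
  shows "(\<Sum>p\<in>J. (\<alpha> p * u + s * (\<beta> p * v))\<^sup>2) =
    u * u * (\<Sum>p\<in>J. \<alpha> p * \<alpha> p) + 2 * s * (u * v * (\<Sum>p\<in>J. \<alpha> p * \<beta> p))
    + s\<^sup>2 * (v * v * (\<Sum>p\<in>J. \<beta> p * \<beta> p))"
proof -
  have "(\<alpha> p * u + s * (\<beta> p * v))\<^sup>2 =
      u * u * (\<alpha> p * \<alpha> p) + 2 * s * (u * v) * (\<alpha> p * \<beta> p) + s\<^sup>2 * (v * v) * (\<beta> p * \<beta> p)" for p
    by (simp add: power2_eq_square algebra_simps)
  then show ?thesis by (simp add: sum.distrib sum_distrib_left mult.assoc)
qed

lemma pmean_part_split_part_in_cone_diffs:
  assumes n: "2 \<le> n" and ab: "a \<in> {1..d}" "b \<in> {1..d}"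
    and uv: "0 \<notin> set u" "0 \<notin> set v" "sum_list u = d - a" "sum_list v = d - b"
  shows "(\<lambda>x. pmean_part n (u @ v @ [a + b]) x - pmean_part n (u @ v @ [a, b]) x)
           \<in> cone_diffs (pmean_sos_cone n d)"
proof -
  let ?U = "pmean_part n u" and ?V = "pmean_part n v"
  let ?J = "{..<n} \<times> {..<n}"
  define \<Delta> where "\<Delta> e p x = x (fst p) ^ e - x (snd p) ^ e" for e p and x :: "nat \<Rightarrow> real"
  define D where "D e e' x = (\<Sum>p\<in>?J. \<Delta> e p x * \<Delta> e' p x)" for e e' x
  have D_eq: "D e e' x = (\<Sum>i<n. \<Sum>j<n. (x i ^ e - x j ^ e) * (x i ^ e' - x j ^ e'))" for e e' x
    by (simp add: D_def \<Delta>_def sum.cartesian_product split_beta)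
  define f where "f p x = \<Delta> a p x * ?U x" for p x
  define g where "g p x = \<Delta> b p x * ?V x" for p x
  have U: "?U \<in> sym_forms n (d - a)" and V: "?V \<in> sym_forms n (d - b)"
    using pmean_part_in_sym_forms uv by metis+
  have "f p \<in> Tsub n d" "g p \<in> Tsub n d" if "p \<in> ?J" for p
    using that ab power_diff_mult_sym_form_in_Tsub[OF _ _ _ U] power_diff_mult_sym_form_in_Tsub[OF _ _ _ V]
    unfolding f_def g_def \<Delta>_def by auto
  then have T: "(\<lambda>x. f p x + s * g p x) \<in> Tsub n d" if "p \<in> ?J" for p s
    using that by (intro Tsub_add Tsub_scale) auto
  have K: "(\<lambda>x. \<Sum>p\<in>?J. (f p x + s * g p x)\<^sup>2) \<in> pmean_sos_cone n d" for s
  proof -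
    have "(\<lambda>x. (f p x + s * g p x)\<^sup>2) \<in> sums_of_squares (Tsub n d)" if "p \<in> ?J" for p
      using square_in_sums_of_squares[OF T[OF that]] .
    then have "(\<lambda>x. \<Sum>p\<in>?J. (f p x + s * g p x)\<^sup>2) \<in> sums_of_squares (Tsub n d)"
      using function_cone_sums_of_squares[of "Tsub n d", OF Tsub_scale]
      by (intro function_cone_sum) auto
    moreover have "(\<Sum>p\<in>?J. (f p x + s * g p x)\<^sup>2) =
        ?U x * ?U x * D a a x + 2 * s * (?U x * ?V x * D a b x) + s\<^sup>2 * (?V x * ?V x * D b b x)" for x
      unfolding f_def g_def D_def by (rule sum_square_expand)
    moreover have "(\<lambda>x. ?U x * ?U x * D a a x + 2 * s * (?U x * ?V x * D a b x)
        + s\<^sup>2 * (?V x * ?V x * D b b x)) \<in> pmean_span n (2 * d)"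
      unfolding D_eq using ab uv
      by (intro pmean_span_add pmean_span_scale pmean_parts_mult_power_diffs_in_pmean_span) auto
    ultimately show ?thesis by (simp add: pmean_sos_cone_def)
  qed
  have "(\<lambda>x. \<Sum>p\<in>?J. f p x * g p x) \<in> cone_diffs (pmean_sos_cone n d)"
    using cone_diffs_polarization[OF function_cone_pmean_sos_cone K[of 1]] K[of "-1"] by simp
  then have "(\<lambda>x. (1 / (2 * (real n)\<^sup>2)) * (\<Sum>p\<in>?J. f p x * g p x)) \<in> cone_diffs (pmean_sos_cone n d)"
    by (rule cone_diffs_scale[OF function_cone_pmean_sos_cone])
  moreover have "(\<Sum>p\<in>?J. f p x * g p x) = ?U x * ?V x * D a b x" for x
    unfolding f_def g_def D_def by (simp add: sum_distrib_left mult_ac)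
  moreover have "?U x * ?V x * D a b x = 2 * (real n)\<^sup>2 *
      (pmean_part n (u @ v @ [a + b]) x - pmean_part n (u @ v @ [a, b]) x)" for x
    unfolding D_eq sum_sum_power_diffs by (simp add: algebra_simps)
  ultimately show ?thesis using n by simp
qed

text \<open>Cut the list at the first prefix of weight at least \<open>d\<close>; if the weight
  overshoots \<open>d\<close>, the last part of that prefix straddles the cut.\<close>
lemma partition_halves_or_straddle:
  fixes l :: "nat list"
  assumes "sum_list l = 2 * d"
  obtains u v where "mset l = mset (u @ v)" "set u \<subseteq> set l" "set v \<subseteq> set l"
      "sum_list u = d" "sum_list v = d"
  | u v a b where "mset l = mset (u @ v @ [a + b])" "set u \<subseteq> set l" "set v \<subseteq> set l"
      "a \<in> {1..d}" "b \<in> {1..d}" "sum_list u = d - a" "sum_list v = d - b"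
proof -
  define k where "k = (LEAST k. d \<le> sum_list (take k l))"
  have "d \<le> sum_list (take (length l) l)" using assms by simp
  then have k: "d \<le> sum_list (take k l)" "k \<le> length l"
    unfolding k_def by (rule LeastI, rule Least_le)
  have sum_take_drop: "sum_list (take k l) + sum_list (drop k l) = 2 * d"
    using assms by (metis append_take_drop_id sum_list_append)
  show thesis
  proof (cases "sum_list (take k l) = d")
    case True
    then show thesis using sum_take_drop
      by (intro that(1)[of "take k l" "drop k l"]) (auto dest: in_set_takeD in_set_dropD)
  next
    case False
    obtain k' where k': "k = Suc k'"
      using k(1) False by (cases k) auto
    have "\<not> d \<le> sum_list (take k' l)"
      using not_less_Least[of k' "\<lambda>k. d \<le> sum_list (take k l)"] unfolding k_def[symmetric] k' by simp
    moreover have take_k: "take k l = take k' l @ [l ! k']"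
      using k(2) k' by (simp add: take_Suc_conv_app_nth)
    ultimately have split: "sum_list (take k' l) < d" "d < sum_list (take k' l) + l ! k'"
      using k(1) False by auto
    define a where "a = d - sum_list (take k' l)"
    define b where "b = l ! k' - a"
    have "l = take k' l @ l ! k' # drop k l"
      using append_take_drop_id[of k l] take_k by simp
    then have "mset l = mset (take k' l @ l ! k' # drop k l)" by (rule arg_cong)
    moreover have "l ! k' = a + b" using split by (simp add: a_def b_def)
    ultimately have "mset l = mset (take k' l @ drop k l @ [a + b])" by simp
    moreover have "a \<in> {1..d}" "b \<in> {1..d}" "sum_list (take k' l) = d - a" "sum_list (drop k l) = d - b"
      using split sum_take_drop take_k by (auto simp: a_def b_def)
    ultimately show thesis
      by (intro that(2)[of "take k' l" "drop k l" a b]) (auto dest: in_set_takeD in_set_dropD)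
  qed
qed

lemma pmean_part_in_cone_diffs:
  assumes "0 < d \<Longrightarrow> 2 \<le> n" "0 \<notin> set l" "sum_list l = 2 * d"
  shows "pmean_part n l \<in> cone_diffs (pmean_sos_cone n d)"
  using assms(2,3)
proof (induction "2 * d - length l" arbitrary: l rule: less_induct)
  case less
  from less.prems(2) show ?case
  proof (cases rule: partition_halves_or_straddle)
    case (1 u v)
    then have "0 \<notin> set u" "0 \<notin> set v" using less.prems(1) by auto
    then show ?thesis
      using pmean_part_halves_in_cone_diffs[OF _ _ 1(4,5)] pmean_part_mset_cong[OF 1(1)] by simp
  next
    case (2 u v a b)
    let ?l' = "u @ v @ [a, b]"
    have l': "0 \<notin> set ?l'" "sum_list ?l' = 2 * d"
      using 2 less.prems by auto
    have "length l = length (u @ v @ [a + b])" using 2(1) by (metis size_mset)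
    then have "2 * d - length ?l' < 2 * d - length l"
      using length_le_sum_list[OF l'(1)] l'(2) by simp
    then have "pmean_part n ?l' \<in> cone_diffs (pmean_sos_cone n d)"
      using less.hyps l' by blast
    moreover have "(\<lambda>x. pmean_part n (u @ v @ [a + b]) x - pmean_part n ?l' x) \<in> cone_diffs (pmean_sos_cone n d)"
      using 2 less.prems assms(1) by (intro pmean_part_split_part_in_cone_diffs) auto
    ultimately have "(\<lambda>x. (pmean_part n (u @ v @ [a + b]) x - pmean_part n ?l' x) + pmean_part n ?l' x)
        \<in> cone_diffs (pmean_sos_cone n d)"
      by (intro cone_diffs_add function_cone_pmean_sos_cone)
    then show ?thesis using pmean_part_mset_cong[OF 2(1)] by (simp only: diff_add_cancel)
  qed
qed

text \<open>Only \<open>n \<ge> 2\<close> (for \<open>d > 0\<close>) is used: \<open>n \<ge> 2d\<close> makes the \<open>p\<^sub>\<lambda>\<close> linearly independent,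
  which the coefficient formulation of full-dimensionality does not require.\<close>
theorem lemma5p2:
  fixes n d :: nat
  assumes "n \<ge> 2 * d"
  shows "\<exists>c0 :: nat list \<Rightarrow> real. \<exists>\<epsilon> > 0. \<forall>c :: nat list \<Rightarrow> real.
           (\<forall>lam\<in>partitions_of (2*d). \<bar>c lam - c0 lam\<bar> < \<epsilon>) \<longrightarrow>
           (\<lambda>x. \<Sum>lam\<in>partitions_of (2*d). c lam * pmean_part n lam x) \<in> sos_T_cone n d"
proof -
  have "pmean_part n lam \<in> cone_diffs (pmean_sos_cone n d)" if "lam \<in> partitions_of (2 * d)" for lam
    using that assms by (intro pmean_part_in_cone_diffs) (auto simp: partitions_of_def)
  moreover have "pmean_sos_cone n d \<subseteq> {f. \<exists>e. f = (\<lambda>x. \<Sum>lam\<in>partitions_of (2 * d). e lam * pmean_part n lam x)}"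
    by (auto simp: pmean_sos_cone_def pmean_span_def)
  ultimately obtain c0 and \<epsilon> :: real where "\<epsilon> > 0" and
    "\<forall>c. (\<forall>lam\<in>partitions_of (2 * d). \<bar>c lam - c0 lam\<bar> < \<epsilon>) \<longrightarrow>
       (\<lambda>x. \<Sum>lam\<in>partitions_of (2 * d). c lam * pmean_part n lam x) \<in> pmean_sos_cone n d"
    using function_cone_has_interior_point[OF function_cone_pmean_sos_cone] by blast
  then show ?thesis using pmean_sos_cone_subset_sos_T_cone by blast
qed

end
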